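(* Let $\mathbb{S}\in\mathbb{Z}^{N_X\times N_e}$, $\mathcal{X}=\mathbb{R}^{N_X}_{>0}$, let $\Phi$ be a primal thermodynamic function on $\mathcal{X}$, $\tilde{x}\in\mathcal{X}$, $f_{NE}\in\mathbb{R}^{N_e}$ a constant vector, and $\{\Psi^*_x\}_{x\in\mathcal{X}}$ a family of dissipation functions on $\mathbb{R}^{N_e}$. Consider the flow $$\dot{x}=-\mathbb{S}\,\nabla\Psi^*_x\big(f(x)\big),\qquad f(x):=\mathbb{S}^T\nabla_x\mathcal{D}_\Phi[x\|\tilde{x}]+f_{NE}=\mathbb{S}^T\big(\nabla\Phi(x)-\nabla\Phi(\tilde{x})\big)+f_{NE},$$ with flux $j(x):=\nabla\Psi^*_x(f(x))$, and let $\mathcal{M}^{\mathrm{DB}}:=\{x\in\mathcal{X}: j(x)=0\}$. If $\mathcal{M}^{\mathrm{DB}}\neq\emptyset$, then $f_{NE}\in\mathrm{Im}\,\mathbb{S}^T$ (i.e. the flow is an equilibrium flow).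
   Context: A primal thermodynamic function is a strictly convex differentiable $\Phi:\mathcal{X}\to\mathbb{R}$ such that $\{\nabla\Phi(x):x\in\mathcal{X}\}=\mathbb{R}^{N_X}$ and, for every $x_{in}\in\mathcal{X}$ and $x_{bd}\in\mathbb{R}^{N_X}_{\ge0}\setminus\mathcal{X}$, $\lim_{\lambda\to0^+}\frac{d}{d\lambda}\Phi(\lambda x_{in}+(1-\lambda)x_{bd})=-\infty$. Its Bregman divergence is $\mathcal{D}_\Phi[x\|x']=\Phi(x)-\Phi(x')-\langle x-x',\nabla\Phi(x')\rangle$. A dissipation function on $\mathbb{R}^{N_e}$ is a strictly convex, continuously differentiable, $1$-coercive, even function $\psi$ with $\psi(0)=0$; for such a function $\nabla\psi$ is a bijection of $\mathbb{R}^{N_e}$ with $\nabla\psi(f)=0$ iff $f=0$. *)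

theory Defs
  imports "HOL-Analysis.Analysis"
begin

definition strict_convex_on :: "'a::real_vector set \<Rightarrow> ('a \<Rightarrow> real) \<Rightarrow> bool" where
  "strict_convex_on S g \<longleftrightarrow> convex S \<and>
     (\<forall>x\<in>S. \<forall>y\<in>S. x \<noteq> y \<longrightarrow> (\<forall>t::real. 0 < t \<and> t < 1 \<longrightarrow>
        g ((1 - t) *\<^sub>R x + t *\<^sub>R y) < (1 - t) * g x + t * g y))"

definition grad :: "('a::real_inner \<Rightarrow> real) \<Rightarrow> 'a \<Rightarrow> 'a" where
  "grad g x = (THE v. (g has_derivative (\<lambda>h. v \<bullet> h)) (at x))"

definition pos_orthant :: "(real ^ 'n) set" where
  "pos_orthant = {x. \<forall>i. 0 < x $ i}"

definition nonneg_orthant :: "(real ^ 'n) set" where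
  "nonneg_orthant = {x. \<forall>i. 0 \<le> x $ i}"

definition primal_thermo :: "(real ^ 'n) set \<Rightarrow> (real ^ 'n \<Rightarrow> real) \<Rightarrow> bool" where
  "primal_thermo X \<Phi> \<longleftrightarrow>
     strict_convex_on X \<Phi> \<and>
     (\<forall>x\<in>X. \<Phi> differentiable (at x)) \<and>
     grad \<Phi> ` X = UNIV \<and>
     (\<forall>xin\<in>X. \<forall>xbd\<in>nonneg_orthant - X.
        filterlim (\<lambda>l. deriv (\<lambda>t. \<Phi> (t *\<^sub>R xin + (1 - t) *\<^sub>R xbd)) l) at_bot (at_right 0))"

definition bregman :: "(real ^ 'n \<Rightarrow> real) \<Rightarrow> real ^ 'n \<Rightarrow> real ^ 'n \<Rightarrow> real" where
  "bregman \<Phi> x x' = \<Phi> x - \<Phi> x' - (x - x') \<bullet> grad \<Phi> x'"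

definition dissipation :: "(real ^ 'e \<Rightarrow> real) \<Rightarrow> bool" where
  "dissipation \<psi> \<longleftrightarrow>
     strict_convex_on UNIV \<psi> \<and>
     (\<forall>f. \<psi> differentiable (at f)) \<and>
     continuous_on UNIV (grad \<psi>) \<and>
     filterlim (\<lambda>f. \<psi> f / norm f) at_top at_infinity \<and>
     (\<forall>f. \<psi> (- f) = \<psi> f) \<and>
     \<psi> 0 = 0"

end

theory Submission
  imports Defs
begin

text \<open>
  A dissipation function \<open>\<psi>\<close> has no critical point other than the origin: being convex, \<psi> is
  minimised at any point where its gradient vanishes, whereas evenness and strict convexity make
  \<open>0\<close> the strict minimiser. So a vanishing flux \<open>j(x) = \<nabla>\<Psi>\<^sup>*\<^sub>x(f(x))\<close> forces the force \<open>f(x)\<close>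
  to vanish, i.e. \<open>f\<^sub>N\<^sub>E = \<SS>\<^sup>T(\<nabla>\<Phi>(x\<^sub>t) - \<nabla>\<Phi>(x))\<close>.
\<close>

lemma grad_has_derivative:
  fixes g :: "'a::euclidean_space \<Rightarrow> real"
  assumes "g differentiable (at x)"
  shows "(g has_derivative (\<lambda>h. grad g x \<bullet> h)) (at x)"
proof -
  obtain D where D: "(g has_derivative D) (at x)"
    using assms differentiable_def by blast
  define v where "v = adjoint D 1"
  have "D = (\<lambda>h. v \<bullet> h)"
    using adjoint_works[OF has_derivative_linear[OF D], of _ 1]
    by (auto simp: v_def inner_commute)
  with D have v: "(g has_derivative (\<lambda>h. v \<bullet> h)) (at x)"
    by simp
  have "w = v" if "(g has_derivative (\<lambda>h. w \<bullet> h)) (at x)" for w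
    using has_derivative_unique[OF that v] by (metis vector_eq_rdot)
  with v have "grad g x = v"
    unfolding grad_def by (rule the_equality)
  with v show ?thesis
    by simp
qed

lemma strict_convex_on_imp_convex_on:
  assumes "strict_convex_on S g"
  shows "convex_on S g"
proof (rule convex_onI)
  show "convex S"
    using assms by (simp add: strict_convex_on_def)
  fix t :: real and x y
  assume "0 < t" "t < 1" "x \<in> S" "y \<in> S"
  then show "g ((1 - t) *\<^sub>R x + t *\<^sub>R y) \<le> (1 - t) * g x + t * g y"
    using assms unfolding strict_convex_on_def
    by (cases "x = y") (auto simp flip: scaleR_add_left distrib_right intro: less_imp_le)
qed

lemma convex_on_UNIV_along_line:
  assumes "convex_on UNIV f"
  shows "convex_on UNIV (\<lambda>t::real. f (x + t *\<^sub>R d))"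
proof (rule convex_onI)
  fix s a b :: real
  assume "0 < s" "s < 1"
  moreover have "x + ((1 - s) *\<^sub>R a + s *\<^sub>R b) *\<^sub>R d
      = (1 - s) *\<^sub>R (x + a *\<^sub>R d) + s *\<^sub>R (x + b *\<^sub>R d)"
    by (simp add: algebra_simps)
  ultimately show "f (x + ((1 - s) *\<^sub>R a + s *\<^sub>R b) *\<^sub>R d)
      \<le> (1 - s) * f (x + a *\<^sub>R d) + s * f (x + b *\<^sub>R d)"
    using convex_onD[OF assms] by simp
qed simp

lemma convex_on_UNIV_above_tangent:
  fixes f :: "'a::real_normed_vector \<Rightarrow> real"
  assumes convex: "convex_on UNIV f" and deriv: "(f has_derivative D) (at x)"
  shows "D (y - x) \<le> f y - f x"
proof -
  define g where "g t = f (x + t *\<^sub>R (y - x))" for t :: real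
  have "((\<lambda>t::real. x + t *\<^sub>R (y - x)) has_derivative (\<lambda>t. t *\<^sub>R (y - x))) (at 0)"
    by (auto intro!: derivative_eq_intros)
  moreover have "(f has_derivative D) (at (x + 0 *\<^sub>R (y - x)))"
    using deriv by simp
  ultimately have "(g has_derivative (\<lambda>t. D (t *\<^sub>R (y - x)))) (at 0)"
    unfolding g_def by (rule has_derivative_compose)
  then have "(g has_derivative (\<lambda>t. D (y - x) * t)) (at 0)"
    by (simp add: linear_scale[OF has_derivative_linear[OF deriv]] mult.commute)
  then have "(g has_field_derivative D (y - x)) (at 0 within UNIV)"
    by (simp add: has_field_derivative_def)
  with convex_on_UNIV_along_line[OF convex]
  have "D (y - x) * (1 - 0) \<le> g 1 - g 0"
    unfolding g_def by (intro convex_on_imp_above_tangent) auto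
  then show ?thesis
    by (simp add: g_def)
qed

lemma strict_convex_even_min_at_0:
  fixes f :: "'a::real_vector \<Rightarrow> real"
  assumes strict: "strict_convex_on UNIV f" and even: "\<And>v. f (- v) = f v" and "v \<noteq> 0"
  shows "f 0 < f v"
proof -
  have "v \<noteq> - v"
    using \<open>v \<noteq> 0\<close> by (metis scaleR_2 scaleR_eq_0_iff zero_neq_numeral eq_neg_iff_add_eq_0)
  with strict have "\<forall>t. 0 < t \<and> t < 1 \<longrightarrow>
      f ((1 - t) *\<^sub>R v + t *\<^sub>R (- v)) < (1 - t) * f v + t * f (- v)"
    unfolding strict_convex_on_def by blast
  from this[rule_format, of "1/2"] have "f 0 < f v / 2 + f (- v) / 2"
    by simp
  with even show ?thesis
    by simp
qed

lemma dissipation_grad_eq_0D: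
  assumes "dissipation \<psi>" and "grad \<psi> v = 0"
  shows "v = 0"
proof (rule ccontr)
  assume "v \<noteq> 0"
  have strict: "strict_convex_on UNIV \<psi>" and "\<psi> differentiable (at v)" and "\<And>w. \<psi> (- w) = \<psi> w"
    using assms(1) unfolding dissipation_def by auto
  from grad_has_derivative[OF \<open>\<psi> differentiable (at v)\<close>] assms(2)
  have "(\<psi> has_derivative (\<lambda>h. 0)) (at v)"
    by simp
  from convex_on_UNIV_above_tangent[OF strict_convex_on_imp_convex_on[OF strict] this, of 0]
  have "\<psi> v \<le> \<psi> 0"
    by simp
  moreover have "\<psi> 0 < \<psi> v"
    using strict_convex_even_min_at_0[OF strict] \<open>\<And>w. \<psi> (- w) = \<psi> w\<close> \<open>v \<noteq> 0\<close> by blast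
  ultimately show False
    by simp
qed

theorem mainTheorem3:
  fixes S :: "real ^ 'e ^ 'n"
    and \<Phi> :: "real ^ 'n \<Rightarrow> real"
    and xt :: "real ^ 'n"
    and fNE :: "real ^ 'e"
    and Psi :: "real ^ 'n \<Rightarrow> real ^ 'e \<Rightarrow> real"
  assumes S_int: "\<forall>i k. S $ i $ k \<in> \<int>"
    and Phi: "primal_thermo pos_orthant \<Phi>"
    and xt: "xt \<in> pos_orthant"
    and Psi: "\<forall>x\<in>pos_orthant. dissipation (Psi x)"
    and MDB: "{x \<in> pos_orthant.
                grad (Psi x) (transpose S *v (grad \<Phi> x - grad \<Phi> xt) + fNE) = 0} \<noteq> {}"
  shows "fNE \<in> range (\<lambda>y. transpose S *v y)"
proof -
  obtain x where "x \<in> pos_orthant"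
    and "grad (Psi x) (transpose S *v (grad \<Phi> x - grad \<Phi> xt) + fNE) = 0"
    using MDB by blast
  with Psi have "transpose S *v (grad \<Phi> x - grad \<Phi> xt) + fNE = 0"
    using dissipation_grad_eq_0D by blast
  then have "fNE = - (transpose S *v (grad \<Phi> x - grad \<Phi> xt))"
    by (rule add.inverse_unique[symmetric])
  also have "\<dots> = transpose S *v (grad \<Phi> xt - grad \<Phi> x)"
    by (simp add: matrix_vector_mult_diff_distrib)
  finally show ?thesis
    by blast
qed

end
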